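(* Let $G$ be a simple graph with at least one edge, maximum degree $\Delta(G)$ and $t(G)$ triangles. If $t(G)\le\lfloor(\Delta(G)+1)/3\rfloor$, then $\lambda_1=\mu_1$, where $\lambda_1$ is the largest $\mathcal{H}$-eigenvalue of $G$ and $\mu_1$ is the largest Laplacian eigenvalue of $G$.
   Context: For an oriented edge $e$ write $e^-$ for its tail and $e^+$ for its head. For distinct edges $e,e'$: $e\leftrightarrow e'$ means $e^+=e'^-$ or $e'^+=e^-$; $e\overset{\pm}{\sim}e'$ means $e^+=e'^+$ or $e^-=e'^-$; $e\vartriangle e'$ means $e,e'$ are two edges of a common triangle. $\triangle(e)$ is the number of triangles containing $e$. The Helmholtzian matrix $\mathcal{H}(G)=(h_{ee'})$ is indexed by edges, with $h_{ee}=\triangle(e)+2$, and for $e\ne e'$: $h_{ee'}=-1$ if $e\leftrightarrow e'$ and not $e\vartriangle e'$; $h_{ee'}=1$ if $e\overset{\pm}{\sim}e'$ and not $e\vartriangle e'$; $h_{ee'}=0$ otherwise. The $\mathcal{H}$-eigenvalues are the eigenvalues of $\mathcal{H}(G)$ for an arbitrary orientation (independent of the orientation). The Laplacian matrix is $L(G)=D(G)-A(G)$. *)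

theory Defs
  imports Complex_Main
begin

definition simple_graph :: "'a set \<Rightarrow> 'a set set \<Rightarrow> bool" where
  "simple_graph V E \<longleftrightarrow> finite V \<and> (\<forall>e\<in>E. \<exists>u v. u \<in> V \<and> v \<in> V \<and> u \<noteq> v \<and> e = {u, v})"

definition degree :: "'a set set \<Rightarrow> 'a \<Rightarrow> nat" where
  "degree E v = card {e\<in>E. v \<in> e}"

definition max_degree :: "'a set \<Rightarrow> 'a set set \<Rightarrow> nat" where
  "max_degree V E = Max (degree E ` V)"

definition is_triangle :: "'a set \<Rightarrow> 'a set set \<Rightarrow> 'a set \<Rightarrow> bool" where
  "is_triangle V E T \<longleftrightarrow> T \<subseteq> V \<and> card T = 3 \<and>
     (\<forall>u\<in>T. \<forall>v\<in>T. u \<noteq> v \<longrightarrow> {u, v} \<in> E)"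

definition num_triangles :: "'a set \<Rightarrow> 'a set set \<Rightarrow> nat" where
  "num_triangles V E = card {T. is_triangle V E T}"

definition orientation :: "'a set set \<Rightarrow> ('a \<times> 'a) set \<Rightarrow> bool" where
  "orientation E Or \<longleftrightarrow> (\<forall>p\<in>Or. {fst p, snd p} \<in> E) \<and>
     (\<forall>e\<in>E. \<exists>!p. p \<in> Or \<and> {fst p, snd p} = e)"

text \<open>For oriented edge p: tail = fst p, head = snd p.\<close>

definition tri_count :: "'a set \<Rightarrow> 'a set set \<Rightarrow> 'a \<times> 'a \<Rightarrow> nat" where
  "tri_count V E p = card {T. is_triangle V E T \<and> {fst p, snd p} \<subseteq> T}"

definition in_common_triangle :: "'a set \<Rightarrow> 'a set set \<Rightarrow> 'a \<times> 'a \<Rightarrow> 'a \<times> 'a \<Rightarrow> bool" where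
  "in_common_triangle V E p q \<longleftrightarrow>
     (\<exists>T. is_triangle V E T \<and> {fst p, snd p} \<subseteq> T \<and> {fst q, snd q} \<subseteq> T)"

definition head_tail_adj :: "'a \<times> 'a \<Rightarrow> 'a \<times> 'a \<Rightarrow> bool" where
  "head_tail_adj p q \<longleftrightarrow> snd p = fst q \<or> snd q = fst p"

definition same_end_adj :: "'a \<times> 'a \<Rightarrow> 'a \<times> 'a \<Rightarrow> bool" where
  "same_end_adj p q \<longleftrightarrow> snd p = snd q \<or> fst p = fst q"

definition helmholtzian :: "'a set \<Rightarrow> 'a set set \<Rightarrow> 'a \<times> 'a \<Rightarrow> 'a \<times> 'a \<Rightarrow> real" where
  "helmholtzian V E p q =
     (if p = q then real (tri_count V E p) + 2
      else if head_tail_adj p q \<and> \<not> in_common_triangle V E p q then -1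
      else if same_end_adj p q \<and> \<not> in_common_triangle V E p q then 1
      else 0)"

definition laplacian :: "'a set set \<Rightarrow> 'a \<Rightarrow> 'a \<Rightarrow> real" where
  "laplacian E u v = (if u = v then real (degree E u) else if {u, v} \<in> E then -1 else 0)"

text \<open>Both matrices considered are real symmetric, so all
  their eigenvalues are real.\<close>

definition is_eigenvalue :: "'i set \<Rightarrow> ('i \<Rightarrow> 'i \<Rightarrow> real) \<Rightarrow> real \<Rightarrow> bool" where
  "is_eigenvalue I M c \<longleftrightarrow> (\<exists>x. (\<exists>i\<in>I. x i \<noteq> 0) \<and>
     (\<forall>i\<in>I. (\<Sum>j\<in>I. M i j * x j) = c * x i))"

definition largest_eigenvalue :: "'i set \<Rightarrow> ('i \<Rightarrow> 'i \<Rightarrow> real) \<Rightarrow> real" where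
  "largest_eigenvalue I M = Max {c. is_eigenvalue I M c}"

end

theory Submission
  imports Defs "Jordan_Normal_Form.Char_Poly" "HOL-Analysis.Elementary_Metric_Spaces"
begin

(* Let B be the vertex-arc incidence matrix of the orientation, so that grad x = B^T x,
   divergence z = B z and L = B B^T.  The Helmholtzian splits as H = B^T B + U, where the
   up-Laplacian U comes from the triangles, annihilates every gradient and has absolute
   row sums 3 t(e).  Hence H B^T = B^T L and, H being symmetric, B H = L B.  So every nonzero
   Laplacian eigenvalue is an H-eigenvalue, while an H-eigenvector z either is mapped by B
   to a Laplacian eigenvector or satisfies B z = 0 and is then an eigenvector of U, whose
   eigenvalues are at most 3 t(G) by Gershgorin.  The star vector of a vertex of maximum
   degree has Laplacian Rayleigh quotient at least Delta + 1, and Delta + 1 >= 3 t(G) by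
   hypothesis. *)

section \<open>Eigenvalues of symmetric matrices on finite index sets\<close>

definition symmetric_on :: "'i set \<Rightarrow> ('i \<Rightarrow> 'i \<Rightarrow> real) \<Rightarrow> bool" where
  "symmetric_on I M \<longleftrightarrow> (\<forall>i\<in>I. \<forall>j\<in>I. M i j = M j i)"

definition matvec :: "'i set \<Rightarrow> ('i \<Rightarrow> 'i \<Rightarrow> real) \<Rightarrow> ('i \<Rightarrow> real) \<Rightarrow> 'i \<Rightarrow> real" where
  "matvec I M x i = (\<Sum>j\<in>I. M i j * x j)"

definition dot :: "'i set \<Rightarrow> ('i \<Rightarrow> real) \<Rightarrow> ('i \<Rightarrow> real) \<Rightarrow> real" where
  "dot I x y = (\<Sum>i\<in>I. x i * y i)"

lemma is_eigenvalue_iff_matvec: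
  "is_eigenvalue I M c \<longleftrightarrow> (\<exists>x. (\<exists>i\<in>I. x i \<noteq> 0) \<and> (\<forall>i\<in>I. matvec I M x i = c * x i))"
  unfolding is_eigenvalue_def matvec_def ..

lemma dot_commute: "dot I x y = dot I y x"
  unfolding dot_def by (simp add: mult.commute)

lemma dot_cong: "(\<And>i. i \<in> I \<Longrightarrow> x i = x' i) \<Longrightarrow> (\<And>i. i \<in> I \<Longrightarrow> y i = y' i) \<Longrightarrow> dot I x y = dot I x' y'"
  unfolding dot_def by simp

lemma dot_self_nonneg: "0 \<le> dot I x x"
  unfolding dot_def by (simp add: sum_nonneg)

lemma dot_self_eq_0_iff: "finite I \<Longrightarrow> dot I x x = 0 \<longleftrightarrow> (\<forall>i\<in>I. x i = 0)"
  unfolding dot_def by (simp add: sum_nonneg_eq_0_iff)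

lemma dot_self_pos: "finite I \<Longrightarrow> \<exists>i\<in>I. x i \<noteq> 0 \<Longrightarrow> 0 < dot I x x"
  using dot_self_eq_0_iff dot_self_nonneg by (metis order_le_less)

lemma dot_scale_left: "dot I (\<lambda>i. c * x i) y = c * dot I x y"
  unfolding dot_def by (simp add: sum_distrib_left mult.assoc)

lemma dot_scale_right: "dot I x (\<lambda>i. c * y i) = c * dot I x y"
  unfolding dot_def by (simp add: sum_distrib_left mult.left_commute)

lemma dot_add_scaled_left: "dot I (\<lambda>i. x i + t * y i) z = dot I x z + t * dot I y z"
  unfolding dot_def by (simp add: algebra_simps sum.distrib sum_distrib_left)

lemma dot_add_scaled_right: "dot I z (\<lambda>i. x i + t * y i) = dot I z x + t * dot I z y"
  unfolding dot_def by (simp add: algebra_simps sum.distrib sum_distrib_left)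

lemma matvec_scale: "matvec I M (\<lambda>i. c * x i) = (\<lambda>i. c * matvec I M x i)"
  unfolding matvec_def by (simp add: sum_distrib_left mult.left_commute)

lemma matvec_add_scaled: "matvec I M (\<lambda>i. x i + t * y i) = (\<lambda>i. matvec I M x i + t * matvec I M y i)"
  unfolding matvec_def by (simp add: algebra_simps sum.distrib sum_distrib_left)

lemma matvec_shift:
  assumes "finite I" and "i \<in> I"
  shows "matvec I (\<lambda>i j. (if i = j then s else 0) - M i j) y i = s * y i - matvec I M y i"
proof -
  have "matvec I (\<lambda>i j. (if i = j then s else 0) - M i j) y i
      = (\<Sum>j\<in>I. (if i = j then s * y j else 0) - M i j * y j)"
    unfolding matvec_def by (intro sum.cong refl) (simp add: left_diff_distrib)
  then show ?thesis using assms by (simp add: sum_subtractf matvec_def)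
qed

lemma dot_matvec_commute:
  assumes symm: "symmetric_on I M"
  shows "dot I x (matvec I M y) = dot I y (matvec I M x)"
proof -
  have "dot I x (matvec I M y) = (\<Sum>i\<in>I. \<Sum>j\<in>I. x i * M i j * y j)"
    unfolding dot_def matvec_def by (simp add: sum_distrib_left mult.assoc)
  also have "\<dots> = (\<Sum>j\<in>I. \<Sum>i\<in>I. y j * M j i * x i)"
    by (subst sum.swap) (use symm in \<open>simp add: symmetric_on_def mult.commute mult.left_commute\<close>)
  also have "\<dots> = dot I y (matvec I M x)"
    unfolding dot_def matvec_def by (simp add: sum_distrib_left mult.assoc)
  finally show ?thesis .
qed

lemma quadratic_form_add_scaled:
  assumes symm: "symmetric_on I M"
  shows "dot I (\<lambda>i. x i + t * y i) (matvec I M (\<lambda>i. x i + t * y i))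
    = dot I x (matvec I M x) + 2 * t * dot I y (matvec I M x) + t\<^sup>2 * dot I y (matvec I M y)"
  using dot_matvec_commute[OF symm, where x = x and y = y]
  by (simp add: matvec_add_scaled dot_add_scaled_left dot_add_scaled_right power2_eq_square algebra_simps)

lemma linear_coeff_eq_0_if_quadratic_nonneg:
  fixes a b :: real
  assumes nonneg: "\<And>t. 0 \<le> 2 * t * a + t\<^sup>2 * b" and "0 \<le> a" and "0 \<le> b"
  shows "a = 0"
proof (rule ccontr)
  assume "a \<noteq> 0"
  define t where "t = - a / (b + 1)"
  have ht: "t * (b + 1) = - a" unfolding t_def using \<open>0 \<le> b\<close> by simp
  have "(2 * t * a + t\<^sup>2 * b) * (b + 1)\<^sup>2 = 2 * a * (t * (b + 1)) * (b + 1) + (t * (b + 1))\<^sup>2 * b"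
    by (simp add: power2_eq_square algebra_simps)
  also have "\<dots> = - a\<^sup>2 * (b + 2)"
    unfolding ht by (simp add: power2_eq_square algebra_simps)
  finally have "(2 * t * a + t\<^sup>2 * b) * (b + 1)\<^sup>2 = - a\<^sup>2 * (b + 2)" .
  moreover have "- a\<^sup>2 * (b + 2) < 0" and "0 < (b + 1)\<^sup>2"
    using \<open>a \<noteq> 0\<close> \<open>0 \<le> b\<close> by auto
  ultimately show False using nonneg[of t] by (metis mult_nonneg_nonneg not_le order_less_imp_le)
qed

lemma psd_quadratic_form_eq_0_imp_matvec_eq_0:
  assumes "finite I"
    and symm: "symmetric_on I M"
    and psd: "\<And>y. 0 \<le> dot I y (matvec I M y)"
    and zero: "dot I x (matvec I M x) = 0"
    and "i \<in> I"
  shows "matvec I M x i = 0"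
proof -
  define g where "g = matvec I M x"
  have "dot I (\<lambda>i. x i + t * g i) (matvec I M (\<lambda>i. x i + t * g i))
      = 2 * t * dot I g g + t\<^sup>2 * dot I g (matvec I M g)" for t
    using quadratic_form_add_scaled[OF symm, where x = x and t = t and y = g] zero
    by (simp add: g_def)
  then have "0 \<le> 2 * t * dot I g g + t\<^sup>2 * dot I g (matvec I M g)" for t
    by (metis psd)
  then have "dot I g g = 0"
    by (rule linear_coeff_eq_0_if_quadratic_nonneg) (simp_all add: dot_self_nonneg psd)
  then show ?thesis using \<open>finite I\<close> \<open>i \<in> I\<close> unfolding g_def by (simp add: dot_self_eq_0_iff)
qed

lemma rayleigh_le_if_le_on_sphere:
  assumes "finite I" and sphere: "\<And>y. dot I y y = 1 \<Longrightarrow> dot I y (matvec I M y) \<le> s"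
  shows "dot I x (matvec I M x) \<le> s * dot I x x"
proof (cases "dot I x x = 0")
  case True
  then have "\<forall>i\<in>I. x i = 0" using \<open>finite I\<close> by (simp add: dot_self_eq_0_iff)
  then show ?thesis using True by (simp add: dot_def)
next
  case False
  define r where "r = 1 / sqrt (dot I x x)"
  have r2: "r * r * dot I x x = 1"
    using False dot_self_nonneg[of I x] unfolding r_def by (simp add: field_simps)
  have "dot I (\<lambda>i. r * x i) (\<lambda>i. r * x i) = 1"
    using r2 by (simp add: dot_scale_left dot_scale_right)
  moreover have "dot I (\<lambda>i. r * x i) (matvec I M (\<lambda>i. r * x i)) = r * r * dot I x (matvec I M x)"
    unfolding matvec_scale dot_scale_left dot_scale_right by simp
  ultimately have "r * r * dot I x (matvec I M x) \<le> s"
    using sphere by metis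
  then have "r * r * dot I x (matvec I M x) \<le> r * r * (s * dot I x x)"
    using r2 by (simp add: algebra_simps)
  moreover have "0 < r * r" using False dot_self_nonneg[of I x] unfolding r_def by simp
  ultimately show ?thesis by (metis mult_le_cancel_left_pos)
qed

lemma abs_le_1_on_sphere:
  assumes "finite I" and "dot I y y = 1" and "i \<in> I"
  shows "\<bar>y i\<bar> \<le> 1"
proof -
  have "(y i)\<^sup>2 \<le> dot I y y"
    unfolding dot_def power2_eq_square using assms(1,3) by (intro member_le_sum) auto
  then show ?thesis using assms(2) by (simp add: abs_square_le_1)
qed

lemma rayleigh_bounded_on_sphere:
  assumes "finite I" and unit: "dot I y y = 1"
  shows "dot I y (matvec I M y) \<le> (\<Sum>i\<in>I. \<Sum>j\<in>I. \<bar>M i j\<bar>)"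
proof -
  have y1: "\<bar>y i\<bar> \<le> 1" if "i \<in> I" for i
    using abs_le_1_on_sphere[OF assms that] .
  have "dot I y (matvec I M y) = (\<Sum>i\<in>I. \<Sum>j\<in>I. y i * M i j * y j)"
    unfolding dot_def matvec_def by (simp add: sum_distrib_left mult.assoc)
  also have "\<dots> \<le> (\<Sum>i\<in>I. \<Sum>j\<in>I. \<bar>M i j\<bar>)"
  proof (intro sum_mono)
    fix i j assume "i \<in> I" "j \<in> I"
    have "y i * M i j * y j \<le> \<bar>y i\<bar> * \<bar>y j\<bar> * \<bar>M i j\<bar>"
      by (metis abs_ge_self abs_mult mult.commute mult.left_commute)
    also have "\<dots> \<le> \<bar>M i j\<bar>"
      using y1[OF \<open>i \<in> I\<close>] y1[OF \<open>j \<in> I\<close>] by (simp add: mult_le_one mult_left_le_one_le)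
    finally show "y i * M i j * y j \<le> \<bar>M i j\<bar>" .
  qed
  finally show ?thesis .
qed

lemma unit_sequence_convergent_subseq:
  fixes xs :: "nat \<Rightarrow> 'i \<Rightarrow> real"
  assumes "finite I" and unit: "\<And>n. dot I (xs n) (xs n) = 1"
  shows "\<exists>l (r :: nat \<Rightarrow> nat). strict_mono r \<and> (\<forall>i\<in>I. (\<lambda>n. xs (r n) i) \<longlonglongrightarrow> l i)"
proof -
  have "\<forall>d\<subseteq>I. \<exists>l. \<exists>r::nat\<Rightarrow>nat. strict_mono r \<and>
      (\<forall>e>0. eventually (\<lambda>n. \<forall>i\<in>d. dist (xs (r n) i) (l i) < e) sequentially)"
  proof (rule compact_lemma_general[where proj = "\<lambda>x k. x k" and unproj = "\<lambda>x. x"])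
    fix k assume "k \<in> I"
    then have "\<bar>xs n k\<bar> \<le> 1" for n using abs_le_1_on_sphere[OF \<open>finite I\<close> unit] by blast
    then show "bounded ((\<lambda>x. x k) ` range xs)" unfolding bounded_iff by auto
  qed (use \<open>finite I\<close> in auto)
  then obtain l and r :: "nat \<Rightarrow> nat" where "strict_mono r"
    and conv: "\<forall>e>0. eventually (\<lambda>n. \<forall>i\<in>I. dist (xs (r n) i) (l i) < e) sequentially"
    by blast
  have "(\<lambda>n. xs (r n) i) \<longlonglongrightarrow> l i" if "i \<in> I" for i
    unfolding tendsto_iff
  proof (intro allI impI)
    fix e :: real assume "0 < e"
    then have "eventually (\<lambda>n. \<forall>i\<in>I. dist (xs (r n) i) (l i) < e) sequentially" using conv by auto
    then show "eventually (\<lambda>n. dist (xs (r n) i) (l i) < e) sequentially"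
      by (rule eventually_mono) (use that in auto)
  qed
  then show ?thesis using \<open>strict_mono r\<close> by blast
qed

lemma rayleigh_max_on_sphere:
  assumes "finite I" and "I \<noteq> {}"
  obtains l where "dot I l l = 1"
    and "\<And>y. dot I y y = 1 \<Longrightarrow> dot I y (matvec I M y) \<le> dot I l (matvec I M l)"
proof -
  define S where "S = {x. dot I x x = 1}"
  define Q where "Q x = dot I x (matvec I M x)" for x
  obtain i0 where "i0 \<in> I" using \<open>I \<noteq> {}\<close> by auto
  then have "(\<lambda>i. if i = i0 then 1 else 0) \<in> S"
    unfolding S_def dot_def using \<open>finite I\<close> by (simp add: if_distrib cong: if_cong)
  then have S_ne: "Q ` S \<noteq> {}" by auto
  have bdd: "bdd_above (Q ` S)"
    using rayleigh_bounded_on_sphere[OF \<open>finite I\<close>] unfolding S_def Q_def by (intro bdd_aboveI) auto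
  define s where "s = Sup (Q ` S)"
  have "\<exists>x\<in>S. s - inverse (real (Suc n)) < Q x" for n
  proof -
    have "s - inverse (real (Suc n)) < Sup (Q ` S)" unfolding s_def by simp
    then show ?thesis using less_cSup_iff[OF S_ne bdd] by auto
  qed
  then obtain xs where xs_S: "\<And>n. xs n \<in> S" and xs_Q: "\<And>n. s - inverse (real (Suc n)) < Q (xs n)"
    by metis
  have xs_unit: "dot I (xs n) (xs n) = 1" for n using xs_S unfolding S_def by simp
  then obtain l and r :: "nat \<Rightarrow> nat" where "strict_mono r"
    and lim: "\<And>i. i \<in> I \<Longrightarrow> (\<lambda>n. xs (r n) i) \<longlonglongrightarrow> l i"
    using unit_sequence_convergent_subseq[OF \<open>finite I\<close>] by blast
  have "(\<lambda>n. dot I (xs (r n)) (xs (r n))) \<longlonglongrightarrow> dot I l l"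
    unfolding dot_def by (intro tendsto_sum tendsto_mult lim)
  moreover have "(\<lambda>n. dot I (xs (r n)) (xs (r n))) = (\<lambda>n. 1)" using xs_unit by simp
  ultimately have l_unit: "dot I l l = 1" using LIMSEQ_unique[OF tendsto_const] by metis
  have "(\<lambda>n. Q (xs (r n))) \<longlonglongrightarrow> Q l"
    unfolding Q_def dot_def matvec_def by (intro tendsto_sum tendsto_mult lim tendsto_const)
  moreover have "s - inverse (real (Suc n)) \<le> Q (xs (r n))" for n
  proof -
    have "inverse (real (Suc (r n))) \<le> inverse (real (Suc n))"
      using seq_suble[OF \<open>strict_mono r\<close>, of n] by (simp add: le_imp_inverse_le)
    then show ?thesis using xs_Q[of "r n"] by linarith
  qed
  ultimately have "s \<le> Q l"
    using LIMSEQ_le[OF LIMSEQ_inverse_real_of_nat_add_minus[of s]] by fastforce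
  moreover have "Q y \<le> s" if "dot I y y = 1" for y
    unfolding s_def using that bdd by (intro cSup_upper) (auto simp: S_def)
  ultimately show ?thesis using that l_unit unfolding Q_def by fastforce
qed

text \<open>The maximiser of the Rayleigh quotient \<open>s\<close> is a zero of the positive semidefinite
  form of \<open>s I - M\<close>, hence lies in its kernel.\<close>

lemma symmetric_top_eigenpair:
  assumes "finite I" and "I \<noteq> {}"
    and symm: "symmetric_on I M"
  obtains l s where "\<exists>i\<in>I. l i \<noteq> 0" and "\<And>i. i \<in> I \<Longrightarrow> matvec I M l i = s * l i"
    and "\<And>y. dot I y (matvec I M y) \<le> s * dot I y y"
proof -
  obtain l where l_unit: "dot I l l = 1"
    and l_max: "\<And>y. dot I y y = 1 \<Longrightarrow> dot I y (matvec I M y) \<le> dot I l (matvec I M l)"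
    by (rule rayleigh_max_on_sphere[OF assms(1,2), where M = M]) blast
  define s where "s = dot I l (matvec I M l)"
  have rayleigh: "dot I y (matvec I M y) \<le> s * dot I y y" for y
    using rayleigh_le_if_le_on_sphere[OF \<open>finite I\<close>] l_max unfolding s_def by blast
  define M' where "M' = (\<lambda>i j. (if i = j then s else 0) - M i j)"
  have M'_form: "dot I y (matvec I M' y) = s * dot I y y - dot I y (matvec I M y)" for y
  proof -
    have "dot I y (matvec I M' y) = dot I y (\<lambda>i. s * y i - matvec I M y i)"
      unfolding M'_def using \<open>finite I\<close> by (intro dot_cong) (simp_all add: matvec_shift)
    then show ?thesis unfolding dot_def by (simp add: algebra_simps sum_subtractf sum_distrib_left)
  qed
  have "matvec I M' l i = 0" if "i \<in> I" for i
  proof (rule psd_quadratic_form_eq_0_imp_matvec_eq_0[OF \<open>finite I\<close> _ _ _ that])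
    show "symmetric_on I M'" using symm unfolding symmetric_on_def M'_def by auto
    show "0 \<le> dot I y (matvec I M' y)" for y using rayleigh[of y] M'_form[of y] by simp
    show "dot I l (matvec I M' l) = 0" using M'_form[of l] l_unit unfolding s_def by simp
  qed
  then have "\<And>i. i \<in> I \<Longrightarrow> matvec I M l i = s * l i"
    unfolding M'_def using \<open>finite I\<close> by (simp add: matvec_shift)
  moreover have "\<exists>i\<in>I. l i \<noteq> 0" using l_unit dot_self_eq_0_iff[OF \<open>finite I\<close>, of l] by auto
  ultimately show ?thesis using that rayleigh by blast
qed

lemma finite_eigenvalues:
  assumes "finite I"
  shows "finite {c. is_eigenvalue I M c}"
proof -
  define n where "n = card I"
  obtain f where f: "bij_betw f {0..<n} I" using ex_bij_betw_nat_finite[OF assms] n_def by blast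
  define A :: "real Matrix.mat" where "A = Matrix.mat n n (\<lambda>(i, j). M (f i) (f j))"
  have A: "A \<in> carrier_mat n n" unfolding A_def by simp
  have "{c. is_eigenvalue I M c} \<subseteq> {c. poly (char_poly A) c = 0}"
  proof
    fix c assume "c \<in> {c. is_eigenvalue I M c}"
    then obtain x where x_ne: "\<exists>i\<in>I. x i \<noteq> 0" and x_eig: "\<forall>i\<in>I. matvec I M x i = c * x i"
      unfolding is_eigenvalue_iff_matvec by auto
    define v where "v = Matrix.vec n (\<lambda>i. x (f i))"
    have v: "v \<in> carrier_vec n" unfolding v_def by simp
    have "v \<noteq> 0\<^sub>v n"
    proof
      assume "v = 0\<^sub>v n"
      obtain k where "k < n" "x (f k) \<noteq> 0" using x_ne f unfolding bij_betw_def by auto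
      then show False using \<open>v = 0\<^sub>v n\<close> unfolding v_def by (metis index_vec index_zero_vec(1))
    qed
    moreover have "A *\<^sub>v v = c \<cdot>\<^sub>v v"
    proof (rule eq_vecI)
      fix i assume "i < dim_vec (c \<cdot>\<^sub>v v)"
      then have i: "i < n" unfolding v_def by simp
      have "(A *\<^sub>v v) $ i = (\<Sum>j\<in>{0..<n}. M (f i) (f j) * x (f j))"
        using i unfolding A_def v_def by (simp add: mult_mat_vec_def scalar_prod_def)
      also have "\<dots> = matvec I M x (f i)"
        unfolding matvec_def using sum.reindex_bij_betw[OF f, of "\<lambda>j. M (f i) j * x j"] by simp
      also have "\<dots> = c * x (f i)" using x_eig f i unfolding bij_betw_def by auto
      finally show "(A *\<^sub>v v) $ i = (c \<cdot>\<^sub>v v) $ i" using i unfolding v_def by simp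
    qed (simp add: A_def v_def)
    ultimately have "eigenvalue A c" unfolding eigenvalue_def eigenvector_def using v A by auto
    then show "c \<in> {c. poly (char_poly A) c = 0}" using eigenvalue_root_char_poly[OF A] by simp
  qed
  moreover have "char_poly A \<noteq> 0" using degree_monic_char_poly[OF A] by auto
  ultimately show ?thesis using poly_roots_finite finite_subset by blast
qed

lemma
  assumes "finite I" and "I \<noteq> {}"
    and symm: "symmetric_on I M"
  shows largest_eigenvalue_is_eigenvalue: "is_eigenvalue I M (largest_eigenvalue I M)"
    and eigenvalue_le_largest_eigenvalue: "is_eigenvalue I M c \<Longrightarrow> c \<le> largest_eigenvalue I M"
    and rayleigh_le_largest_eigenvalue: "dot I y (matvec I M y) \<le> largest_eigenvalue I M * dot I y y"
proof -
  obtain l s where l_ne: "\<exists>i\<in>I. l i \<noteq> 0" and l_eig: "\<And>i. i \<in> I \<Longrightarrow> matvec I M l i = s * l i"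
    and rayleigh: "\<And>y. dot I y (matvec I M y) \<le> s * dot I y y"
    by (metis symmetric_top_eigenpair[OF assms])
  have s_eig: "is_eigenvalue I M s" unfolding is_eigenvalue_iff_matvec using l_ne l_eig by blast
  have le_s: "c \<le> s" if c_eig: "is_eigenvalue I M c" for c
  proof -
    obtain x where x_ne: "\<exists>i\<in>I. x i \<noteq> 0" and x_eig: "\<forall>i\<in>I. matvec I M x i = c * x i"
      using c_eig unfolding is_eigenvalue_iff_matvec by blast
    have "dot I x (matvec I M x) = dot I x (\<lambda>i. c * x i)"
      by (rule dot_cong) (simp_all add: x_eig)
    then have "c * dot I x x = dot I x (matvec I M x)"
      by (simp add: dot_scale_right)
    also have "\<dots> \<le> s * dot I x x" by (rule rayleigh)
    finally show ?thesis using dot_self_pos[OF \<open>finite I\<close> x_ne] by simp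
  qed
  have "largest_eigenvalue I M = s"
    unfolding largest_eigenvalue_def
    by (rule Max_eqI[OF finite_eigenvalues[OF \<open>finite I\<close>]]) (use le_s s_eig in auto)
  then show "is_eigenvalue I M (largest_eigenvalue I M)"
    and "is_eigenvalue I M c \<Longrightarrow> c \<le> largest_eigenvalue I M"
    and "dot I y (matvec I M y) \<le> largest_eigenvalue I M * dot I y y"
    using s_eig le_s rayleigh by auto
qed

lemma gershgorin_bound:
  assumes "finite I" and "is_eigenvalue I M c"
  shows "\<exists>i\<in>I. \<bar>c\<bar> \<le> (\<Sum>j\<in>I. \<bar>M i j\<bar>)"
proof -
  obtain x where x_ne: "\<exists>i\<in>I. x i \<noteq> 0" and x_eig: "\<forall>i\<in>I. matvec I M x i = c * x i"
    using assms(2) unfolding is_eigenvalue_iff_matvec by blast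
  have fin: "finite ((\<lambda>i. \<bar>x i\<bar>) ` I)" using assms(1) by simp
  have "Max ((\<lambda>i. \<bar>x i\<bar>) ` I) \<in> (\<lambda>i. \<bar>x i\<bar>) ` I" using Max_in[OF fin] x_ne by auto
  then obtain i where i: "i \<in> I" and i_Max: "\<bar>x i\<bar> = Max ((\<lambda>i. \<bar>x i\<bar>) ` I)"
    by (metis imageE)
  have i_max: "\<bar>x j\<bar> \<le> \<bar>x i\<bar>" if "j \<in> I" for j
    unfolding i_Max using fin that by simp
  have "0 < \<bar>x i\<bar>" using x_ne i_max by fastforce
  have "\<bar>c\<bar> * \<bar>x i\<bar> = \<bar>\<Sum>j\<in>I. M i j * x j\<bar>"
    using x_eig i unfolding matvec_def by (simp add: abs_mult)
  also have "\<dots> \<le> (\<Sum>j\<in>I. \<bar>M i j\<bar> * \<bar>x j\<bar>)"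
    by (rule order_trans[OF sum_abs]) (simp add: abs_mult)
  also have "\<dots> \<le> (\<Sum>j\<in>I. \<bar>M i j\<bar>) * \<bar>x i\<bar>"
    unfolding sum_distrib_right by (intro sum_mono mult_left_mono i_max) auto
  finally show ?thesis using i \<open>0 < \<bar>x i\<bar>\<close> by auto
qed

section \<open>Incidence, gradient and divergence of an oriented graph\<close>

definition incidence :: "'a \<Rightarrow> 'a \<times> 'a \<Rightarrow> real" where
  "incidence v p = (if v = snd p then 1 else if v = fst p then -1 else 0)"

definition grad :: "('a \<Rightarrow> real) \<Rightarrow> 'a \<times> 'a \<Rightarrow> real" where
  "grad x p = x (snd p) - x (fst p)"

lemma incidence_eq_0: "v \<notin> {fst q, snd q} \<Longrightarrow> incidence v q = 0"
  unfolding incidence_def by auto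

lemma incidence_mult_grad: "{fst q, snd q} = {a, c} \<Longrightarrow> a \<noteq> c \<Longrightarrow> incidence a q * grad x q = x a - x c"
  unfolding incidence_def grad_def by (cases q) (auto simp: doubleton_eq_iff)

lemma abs_incidence: "{fst q, snd q} = {a, c} \<Longrightarrow> a \<noteq> c \<Longrightarrow> \<bar>incidence a q\<bar> = 1"
  unfolding incidence_def by (cases q) (auto simp: doubleton_eq_iff)

lemma laplacian_symmetric: "symmetric_on V (laplacian E)"
  unfolding laplacian_def symmetric_on_def by (auto simp: insert_commute)

lemma helmholtzian_symmetric: "symmetric_on Or (helmholtzian V E)"
proof -
  have "helmholtzian V E p q = helmholtzian V E q p" for p q
  proof -
    have ht: "head_tail_adj p q = head_tail_adj q p"
      and tri: "in_common_triangle V E p q = in_common_triangle V E q p"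
      unfolding head_tail_adj_def in_common_triangle_def by blast+
    have se: "same_end_adj p q = same_end_adj q p"
      unfolding same_end_adj_def by auto
    show ?thesis unfolding helmholtzian_def ht tri se by (cases "p = q") simp_all
  qed
  then show ?thesis unfolding symmetric_on_def by blast
qed

locale oriented_graph =
  fixes V :: "'a set" and E :: "'a set set" and Or :: "('a \<times> 'a) set"
  assumes simple: "simple_graph V E" and oriented: "orientation E Or"
begin

abbreviation "H \<equiv> helmholtzian V E"
abbreviation "L \<equiv> laplacian E"

lemma finite_V: "finite V"
  using simple unfolding simple_graph_def by auto

lemma edgeE:
  assumes "e \<in> E"
  obtains u v where "u \<in> V" "v \<in> V" "u \<noteq> v" "e = {u, v}"
  using simple assms unfolding simple_graph_def by auto

lemma finite_E: "finite E"
proof -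
  have "E \<subseteq> Pow V" by (auto elim!: edgeE)
  then show ?thesis using finite_V by (simp add: finite_subset)
qed

lemma no_loop: "{v, v} \<notin> E"
  by (metis edgeE doubleton_eq_iff)

lemma arc_edge: "p \<in> Or \<Longrightarrow> {fst p, snd p} \<in> E"
  using oriented unfolding orientation_def by auto

lemma arc_ends:
  assumes "p \<in> Or"
  shows "fst p \<in> V" "snd p \<in> V" "fst p \<noteq> snd p"
  using edgeE[OF arc_edge[OF assms]] by (metis doubleton_eq_iff)+

lemma finite_Or: "finite Or"
proof -
  have "Or \<subseteq> V \<times> V" using arc_ends by force
  then show ?thesis using finite_V by (meson finite_SigmaI finite_subset)
qed

lemma arc_unique: "p \<in> Or \<Longrightarrow> q \<in> Or \<Longrightarrow> {fst p, snd p} = {fst q, snd q} \<Longrightarrow> p = q"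
  using oriented arc_edge unfolding orientation_def by metis

lemma arc_exists: "e \<in> E \<Longrightarrow> \<exists>p\<in>Or. {fst p, snd p} = e"
  using oriented unfolding orientation_def by metis

definition divergence :: "('a \<times> 'a \<Rightarrow> real) \<Rightarrow> 'a \<Rightarrow> real" where
  "divergence z v = (\<Sum>p\<in>Or. incidence v p * z p)"

lemma sum_incidence_mult:
  assumes "p \<in> Or"
  shows "(\<Sum>v\<in>V. incidence v p * x v) = grad x p"
proof -
  have "(\<Sum>v\<in>V. incidence v p * x v)
      = (\<Sum>v\<in>V. (if v = snd p then x v else 0) - (if v = fst p then x v else 0))"
    using arc_ends[OF assms] by (intro sum.cong refl) (auto simp: incidence_def)
  also have "\<dots> = grad x p"
    using arc_ends[OF assms] finite_V by (simp add: sum_subtractf grad_def)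
  finally show ?thesis .
qed

lemma dot_grad_eq_dot_divergence: "dot Or (grad x) z = dot V x (divergence z)"
proof -
  have "dot Or (grad x) z = (\<Sum>p\<in>Or. (\<Sum>v\<in>V. incidence v p * x v) * z p)"
    unfolding dot_def by (intro sum.cong refl) (simp add: sum_incidence_mult)
  also have "\<dots> = (\<Sum>p\<in>Or. \<Sum>v\<in>V. x v * (incidence v p * z p))"
    by (simp add: sum_distrib_left sum_distrib_right mult_ac)
  also have "\<dots> = (\<Sum>v\<in>V. \<Sum>p\<in>Or. x v * (incidence v p * z p))"
    by (rule sum.swap)
  also have "\<dots> = dot V x (divergence z)"
    unfolding dot_def divergence_def by (simp add: sum_distrib_left)
  finally show ?thesis .
qed

lemma card_arcs_at: "card {p\<in>Or. u \<in> {fst p, snd p}} = Defs.degree E u"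
proof -
  have inj: "inj_on (\<lambda>p. {fst p, snd p}) {p\<in>Or. u \<in> {fst p, snd p}}"
    using arc_unique by (auto intro!: inj_onI)
  have img: "(\<lambda>p. {fst p, snd p}) ` {p\<in>Or. u \<in> {fst p, snd p}} = {e\<in>E. u \<in> e}"
  proof
    show "{e\<in>E. u \<in> e} \<subseteq> (\<lambda>p. {fst p, snd p}) ` {p\<in>Or. u \<in> {fst p, snd p}}"
    proof
      fix e assume e: "e \<in> {e\<in>E. u \<in> e}"
      then obtain p where "p \<in> Or" "{fst p, snd p} = e" using arc_exists by blast
      then show "e \<in> (\<lambda>p. {fst p, snd p}) ` {p\<in>Or. u \<in> {fst p, snd p}}" using e by force
    qed
  qed (use arc_edge in auto)
  show ?thesis using card_image[OF inj] unfolding img Defs.degree_def by (rule sym)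
qed

lemma card_arcs_on_edge: "card {p\<in>Or. {fst p, snd p} = {u, v}} = (if {u, v} \<in> E then 1 else 0)"
proof (cases "{u, v} \<in> E")
  case True
  then obtain p where p: "p \<in> Or" "{fst p, snd p} = {u, v}" using arc_exists by blast
  have "{q\<in>Or. {fst q, snd q} = {u, v}} = {p}"
  proof (intro equalityI subsetI)
    fix q assume "q \<in> {q\<in>Or. {fst q, snd q} = {u, v}}"
    then show "q \<in> {p}" using arc_unique[of q p] p by auto
  qed (use p in auto)
  then show ?thesis using True by simp
next
  case False
  then have "{fst p, snd p} \<noteq> {u, v}" if "p \<in> Or" for p using arc_edge[OF that] by metis
  then have no_arc: "{p\<in>Or. {fst p, snd p} = {u, v}} = {}" by blast
  show ?thesis unfolding no_arc using False by simp
qed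

lemma laplacian_eq_sum_incidence:
  assumes "u \<in> V" "v \<in> V"
  shows "L u v = (\<Sum>p\<in>Or. incidence u p * incidence v p)"
proof (cases "u = v")
  case True
  have "(\<Sum>p\<in>Or. incidence u p * incidence v p) = (\<Sum>p\<in>Or. if u \<in> {fst p, snd p} then 1 else 0)"
    using True arc_ends by (intro sum.cong refl) (auto simp: incidence_def)
  also have "\<dots> = L u v"
    using True finite_Or card_arcs_at unfolding laplacian_def by (simp add: sum.If_cases Int_def)
  finally show ?thesis ..
next
  case False
  have "(\<Sum>p\<in>Or. incidence u p * incidence v p) = (\<Sum>p\<in>Or. if {fst p, snd p} = {u, v} then -1 else 0)"
    using False arc_ends by (intro sum.cong refl) (auto simp: incidence_def doubleton_eq_iff)
  also have "\<dots> = L u v"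
    using False finite_Or card_arcs_on_edge[of u v] unfolding laplacian_def
    by (simp add: sum.If_cases Int_def)
  finally show ?thesis ..
qed

lemma laplacian_matvec:
  assumes "u \<in> V"
  shows "matvec V L x u = divergence (grad x) u"
proof -
  have "matvec V L x u = (\<Sum>v\<in>V. (\<Sum>p\<in>Or. incidence u p * incidence v p) * x v)"
    unfolding matvec_def using assms by (intro sum.cong refl) (simp add: laplacian_eq_sum_incidence)
  also have "\<dots> = (\<Sum>v\<in>V. \<Sum>p\<in>Or. incidence u p * (incidence v p * x v))"
    by (simp add: sum_distrib_right mult.assoc)
  also have "\<dots> = (\<Sum>p\<in>Or. \<Sum>v\<in>V. incidence u p * (incidence v p * x v))"
    by (rule sum.swap)
  also have "\<dots> = divergence (grad x) u"
    unfolding divergence_def by (simp add: sum_distrib_left[symmetric] sum_incidence_mult)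
  finally show ?thesis .
qed

lemma laplacian_quadratic_form: "dot V x (matvec V L x) = dot Or (grad x) (grad x)"
  by (simp add: dot_grad_eq_dot_divergence laplacian_matvec cong: dot_cong)

subsection \<open>The up-Laplacian of the triangles\<close>

text \<open>The subtracted term is the \<open>(p, q)\<close> entry of \<open>B\<^sup>T B\<close>, so this is \<open>H\<close> minus
  the down-Laplacian; it vanishes outside common triangles.\<close>

definition up_laplacian :: "'a \<times> 'a \<Rightarrow> 'a \<times> 'a \<Rightarrow> real" where
  "up_laplacian p q = H p q - (incidence (snd p) q - incidence (fst p) q)"

definition triangles_on :: "'a \<times> 'a \<Rightarrow> 'a set set" where
  "triangles_on p = {T. is_triangle V E T \<and> {fst p, snd p} \<subseteq> T}"

definition other_arcs :: "'a \<times> 'a \<Rightarrow> 'a set \<Rightarrow> ('a \<times> 'a) set" where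
  "other_arcs p T = {q\<in>Or. q \<noteq> p \<and> {fst q, snd q} \<subseteq> T}"

definition triangle_neighbours :: "'a \<times> 'a \<Rightarrow> ('a \<times> 'a) set" where
  "triangle_neighbours p = {q\<in>Or. q \<noteq> p \<and> in_common_triangle V E p q}"

lemma helmholtzian_off_triangle:
  assumes p: "p \<in> Or" and q: "q \<in> Or" and "p \<noteq> q" and "\<not> in_common_triangle V E p q"
  shows "H p q = incidence (snd p) q - incidence (fst p) q"
proof -
  obtain a b c d where pq: "p = (a, b)" "q = (c, d)" by (cases p, cases q)
  have "a \<noteq> b" "c \<noteq> d" using arc_ends(3)[OF p] arc_ends(3)[OF q] pq by simp_all
  moreover have "\<not> (a = d \<and> b = c)" using arc_unique[OF p q] \<open>p \<noteq> q\<close> pq by (auto simp: insert_commute)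
  moreover have "\<not> (a = c \<and> b = d)" using \<open>p \<noteq> q\<close> pq by simp
  ultimately show ?thesis
    using assms(4) unfolding pq helmholtzian_def head_tail_adj_def same_end_adj_def incidence_def
    by (cases "b = c"; cases "d = a"; cases "b = d"; cases "a = c") simp_all
qed

lemma up_laplacian_diag: "p \<in> Or \<Longrightarrow> up_laplacian p p = real (card (triangles_on p))"
  using arc_ends(3)[of p]
  unfolding up_laplacian_def helmholtzian_def incidence_def tri_count_def triangles_on_def by auto

lemma up_laplacian_off_diag:
  assumes "p \<in> Or" "q \<in> Or" "q \<noteq> p"
  shows "up_laplacian p q
    = (if q \<in> triangle_neighbours p then - (incidence (snd p) q - incidence (fst p) q) else 0)"
  using assms helmholtzian_off_triangle[of p q]
  unfolding up_laplacian_def triangle_neighbours_def by (auto simp: helmholtzian_def)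

lemma finite_triangles_on: "finite (triangles_on p)"
proof -
  have "triangles_on p \<subseteq> Pow V" unfolding triangles_on_def is_triangle_def by auto
  then show ?thesis using finite_V by (simp add: finite_subset)
qed

lemma triangles_on_third_vertex:
  assumes p: "p \<in> Or" and T: "T \<in> triangles_on p"
  obtains c where "T = {fst p, snd p, c}" "c \<noteq> fst p" "c \<noteq> snd p"
    "{fst p, c} \<in> E" "{snd p, c} \<in> E"
proof -
  let ?a = "fst p" and ?b = "snd p"
  have tri: "is_triangle V E T" and ab_T: "{?a, ?b} \<subseteq> T" using T unfolding triangles_on_def by auto
  then have "card T = 3" and "finite T" unfolding is_triangle_def by (auto intro: card_ge_0_finite)
  have "?a \<noteq> ?b" using arc_ends(3)[OF p] .
  have "\<not> T \<subseteq> {?a, ?b}"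
  proof
    assume "T \<subseteq> {?a, ?b}"
    then have "card T \<le> 2" by (metis card_2_iff card_mono finite.emptyI finite_insert \<open>?a \<noteq> ?b\<close>)
    then show False using \<open>card T = 3\<close> by simp
  qed
  then obtain c where c: "c \<in> T" "c \<noteq> ?a" "c \<noteq> ?b" by auto
  have "card {?a, ?b, c} = 3" using \<open>?a \<noteq> ?b\<close> c by simp
  then have "T = {?a, ?b, c}"
    using ab_T c \<open>card T = 3\<close> \<open>finite T\<close> by (metis card_subset_eq insert_subset)
  moreover have "{?a, c} \<in> E" "{?b, c} \<in> E" using tri c ab_T unfolding is_triangle_def by auto
  ultimately show ?thesis using that c by blast
qed

lemma other_arcs_of_triangle:
  assumes p: "p \<in> Or" and c: "c \<noteq> fst p" "c \<noteq> snd p" and "{fst p, c} \<in> E" "{snd p, c} \<in> E"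
  obtains q1 q2 where "other_arcs p {fst p, snd p, c} = {q1, q2}" "q1 \<noteq> q2"
    "{fst q1, snd q1} = {fst p, c}" "{fst q2, snd q2} = {snd p, c}"
proof -
  let ?a = "fst p" and ?b = "snd p"
  have "?a \<noteq> ?b" using arc_ends(3)[OF p] .
  obtain q1 q2 where q1: "q1 \<in> Or" "{fst q1, snd q1} = {?a, c}"
    and q2: "q2 \<in> Or" "{fst q2, snd q2} = {?b, c}" using arc_exists assms(4,5) by metis
  have "other_arcs p {?a, ?b, c} = {q1, q2}"
  proof (intro equalityI subsetI)
    fix q assume "q \<in> other_arcs p {?a, ?b, c}"
    then have q: "q \<in> Or" "q \<noteq> p" "{fst q, snd q} \<subseteq> {?a, ?b, c}" unfolding other_arcs_def by auto
    have "{fst q, snd q} \<noteq> {?a, ?b}" using arc_unique[OF q(1) p] q(2) by auto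
    then have "{fst q, snd q} = {?a, c} \<or> {fst q, snd q} = {?b, c}"
      using q(3) arc_ends(3)[OF q(1)] by (auto simp: doubleton_eq_iff)
    then show "q \<in> {q1, q2}" using arc_unique[OF q(1) q1(1)] arc_unique[OF q(1) q2(1)] q1 q2 by auto
  next
    fix q assume "q \<in> {q1, q2}"
    moreover have "q1 \<noteq> p" "q2 \<noteq> p" using q1 q2 c \<open>?a \<noteq> ?b\<close> by (auto simp: doubleton_eq_iff)
    ultimately show "q \<in> other_arcs p {?a, ?b, c}" using q1 q2 unfolding other_arcs_def by auto
  qed
  moreover have "q1 \<noteq> q2" using q1 q2 c \<open>?a \<noteq> ?b\<close> by (auto simp: doubleton_eq_iff)
  ultimately show ?thesis using that q1 q2 by blast
qed

lemma triangles_onE: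
  assumes p: "p \<in> Or" and T: "T \<in> triangles_on p"
  obtains c q1 q2 where "c \<noteq> fst p" "c \<noteq> snd p" "other_arcs p T = {q1, q2}" "q1 \<noteq> q2"
    "{fst q1, snd q1} = {fst p, c}" "{fst q2, snd q2} = {snd p, c}"
  by (metis triangles_on_third_vertex[OF p T] other_arcs_of_triangle[OF p])

lemma other_arcs_disjoint:
  assumes p: "p \<in> Or" and "T \<in> triangles_on p" "T' \<in> triangles_on p" "T \<noteq> T'"
  shows "other_arcs p T \<inter> other_arcs p T' = {}"
proof (rule ccontr)
  assume "other_arcs p T \<inter> other_arcs p T' \<noteq> {}"
  then obtain q where q: "q \<in> other_arcs p T" "q \<in> other_arcs p T'" by auto
  obtain c where c: "T = {fst p, snd p, c}" "c \<noteq> fst p" "c \<noteq> snd p"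
    using triangles_on_third_vertex[OF p \<open>T \<in> triangles_on p\<close>] by metis
  obtain c' where c': "T' = {fst p, snd p, c'}" "c' \<noteq> fst p" "c' \<noteq> snd p"
    using triangles_on_third_vertex[OF p \<open>T' \<in> triangles_on p\<close>] by metis
  have "q \<in> Or" "q \<noteq> p" using q unfolding other_arcs_def by auto
  then have "{fst q, snd q} \<noteq> {fst p, snd p}" "fst q \<noteq> snd q"
    using arc_unique[OF _ p] arc_ends(3) by blast+
  moreover have "{fst q, snd q} \<subseteq> T" "{fst q, snd q} \<subseteq> T'" using q unfolding other_arcs_def by auto
  ultimately have "c = c'" using c c' by auto
  then show False using \<open>T \<noteq> T'\<close> c c' by simp
qed

lemma sum_triangle_neighbours:
  assumes p: "p \<in> Or"
  shows "(\<Sum>q\<in>triangle_neighbours p. h q) = (\<Sum>T\<in>triangles_on p. \<Sum>q\<in>other_arcs p T. h q)"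
proof -
  have union: "triangle_neighbours p = (\<Union>T\<in>triangles_on p. other_arcs p T)"
    unfolding triangle_neighbours_def other_arcs_def triangles_on_def in_common_triangle_def by auto
  have "finite (other_arcs p T)" for T unfolding other_arcs_def using finite_Or by simp
  then show ?thesis unfolding union
    by (intro sum.UNION_disjoint finite_triangles_on ballI impI other_arcs_disjoint[OF p])
qed

lemma up_laplacian_grad:
  assumes p: "p \<in> Or"
  shows "(\<Sum>q\<in>Or. up_laplacian p q * grad x q) = 0"
proof -
  have other: "(\<Sum>q\<in>other_arcs p T. (incidence (snd p) q - incidence (fst p) q) * grad x q) = grad x p"
    if T: "T \<in> triangles_on p" for T
  proof -
    obtain c q1 q2 where c: "c \<noteq> fst p" "c \<noteq> snd p" and arcs: "other_arcs p T = {q1, q2}" "q1 \<noteq> q2"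
      and q1: "{fst q1, snd q1} = {fst p, c}" and q2: "{fst q2, snd q2} = {snd p, c}"
      using triangles_onE[OF p T] by metis
    have "fst p \<noteq> snd p" using arc_ends(3)[OF p] .
    then have "incidence (snd p) q1 = 0" "incidence (fst p) q2 = 0"
      by (intro incidence_eq_0; use c q1 q2 in auto)+
    moreover have "incidence (fst p) q1 * grad x q1 = x (fst p) - x c"
      "incidence (snd p) q2 * grad x q2 = x (snd p) - x c"
      using c q1 q2 by (auto intro: incidence_mult_grad)
    ultimately show ?thesis using arcs by (simp add: left_diff_distrib grad_def)
  qed
  have "(\<Sum>q\<in>Or. up_laplacian p q * grad x q)
      = up_laplacian p p * grad x p + (\<Sum>q\<in>Or - {p}. up_laplacian p q * grad x q)"
    using finite_Or p by (simp add: sum.remove)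
  also have "(\<Sum>q\<in>Or - {p}. up_laplacian p q * grad x q)
      = - (\<Sum>q\<in>triangle_neighbours p. (incidence (snd p) q - incidence (fst p) q) * grad x q)"
    using finite_Or p up_laplacian_off_diag[OF p]
    by (subst sum_negf[symmetric], intro sum.mono_neutral_cong_right)
       (auto simp: triangle_neighbours_def left_diff_distrib)
  also have "\<dots> = - real (card (triangles_on p)) * grad x p"
    using other by (simp add: sum_triangle_neighbours[OF p])
  finally show ?thesis using up_laplacian_diag[OF p] by simp
qed

lemma up_laplacian_abs_row_sum:
  assumes p: "p \<in> Or"
  shows "(\<Sum>q\<in>Or. \<bar>up_laplacian p q\<bar>) = 3 * real (tri_count V E p)"
proof -
  have other: "(\<Sum>q\<in>other_arcs p T. \<bar>incidence (snd p) q - incidence (fst p) q\<bar>) = 2"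
    if T: "T \<in> triangles_on p" for T
  proof -
    obtain c q1 q2 where c: "c \<noteq> fst p" "c \<noteq> snd p" and arcs: "other_arcs p T = {q1, q2}" "q1 \<noteq> q2"
      and q1: "{fst q1, snd q1} = {fst p, c}" and q2: "{fst q2, snd q2} = {snd p, c}"
      using triangles_onE[OF p T] by metis
    have "fst p \<noteq> snd p" using arc_ends(3)[OF p] .
    then have "incidence (snd p) q1 = 0" "incidence (fst p) q2 = 0"
      by (intro incidence_eq_0; use c q1 q2 in auto)+
    moreover have "\<bar>incidence (fst p) q1\<bar> = 1" "\<bar>incidence (snd p) q2\<bar> = 1"
      using c q1 q2 by (auto intro: abs_incidence)
    ultimately show ?thesis using arcs by simp
  qed
  have "(\<Sum>q\<in>Or. \<bar>up_laplacian p q\<bar>) = \<bar>up_laplacian p p\<bar> + (\<Sum>q\<in>Or - {p}. \<bar>up_laplacian p q\<bar>)"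
    using finite_Or p by (simp add: sum.remove)
  also have "(\<Sum>q\<in>Or - {p}. \<bar>up_laplacian p q\<bar>)
      = (\<Sum>q\<in>triangle_neighbours p. \<bar>incidence (snd p) q - incidence (fst p) q\<bar>)"
    using finite_Or p up_laplacian_off_diag[OF p]
    by (intro sum.mono_neutral_cong_right) (auto simp: triangle_neighbours_def abs_minus_commute)
  also have "\<dots> = 2 * real (card (triangles_on p))"
    using other by (simp add: sum_triangle_neighbours[OF p])
  finally show ?thesis using up_laplacian_diag[OF p] by (simp add: tri_count_def triangles_on_def)
qed

subsection \<open>Intertwining the Helmholtzian with the Laplacian\<close>

lemma helmholtzian_matvec:
  "matvec Or H z p = grad (divergence z) p + (\<Sum>q\<in>Or. up_laplacian p q * z q)"
proof -
  have "matvec Or H z p = (\<Sum>q\<in>Or. (incidence (snd p) q - incidence (fst p) q) * z q)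
      + (\<Sum>q\<in>Or. up_laplacian p q * z q)"
    unfolding matvec_def up_laplacian_def by (simp add: sum.distrib[symmetric] algebra_simps)
  also have "(\<Sum>q\<in>Or. (incidence (snd p) q - incidence (fst p) q) * z q) = grad (divergence z) p"
    unfolding divergence_def grad_def by (simp add: left_diff_distrib sum_subtractf)
  finally show ?thesis .
qed

lemma helmholtzian_grad:
  assumes "p \<in> Or"
  shows "matvec Or H (grad x) p = grad (matvec V L x) p"
proof -
  have "matvec Or H (grad x) p = grad (divergence (grad x)) p"
    using up_laplacian_grad[OF assms] by (simp add: helmholtzian_matvec)
  also have "\<dots> = grad (matvec V L x) p"
    using arc_ends[OF assms] by (simp add: grad_def laplacian_matvec)
  finally show ?thesis .
qed

text \<open>The divergence at \<open>u\<close> is the pairing with the gradient of the indicator of \<open>u\<close>,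
  so this is the adjoint of \<open>helmholtzian_grad\<close>.\<close>

lemma laplacian_divergence:
  assumes u: "u \<in> V"
  shows "matvec V L (divergence z) u = divergence (matvec Or H z) u"
proof -
  define e where "e = (\<lambda>w. if w = u then 1 else (0::real))"
  have "dot V e y = y u" for y
  proof -
    have "dot V e y = (\<Sum>v\<in>V. if v = u then y v else 0)"
      unfolding dot_def e_def by (intro sum.cong) auto
    then show ?thesis using u finite_V by simp
  qed
  then have "divergence w u = dot Or (grad e) w" for w
    by (simp add: dot_grad_eq_dot_divergence)
  then have "divergence (matvec Or H z) u = dot Or (grad e) (matvec Or H z)" .
  also have "\<dots> = dot Or z (matvec Or H (grad e))"
    by (rule dot_matvec_commute[OF helmholtzian_symmetric])
  also have "\<dots> = dot Or z (grad (matvec V L e))"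
    by (intro dot_cong refl helmholtzian_grad)
  also have "\<dots> = dot V (matvec V L e) (divergence z)"
    by (subst dot_commute) (rule dot_grad_eq_dot_divergence)
  also have "\<dots> = matvec V L (divergence z) u"
  proof -
    have "matvec V L e v = L u v" if "v \<in> V" for v
    proof -
      have "matvec V L e v = L v u"
        using u finite_V by (simp add: matvec_def e_def if_distrib cong: if_cong)
      then show ?thesis using laplacian_symmetric[of V E] u that unfolding symmetric_on_def by simp
    qed
    then show ?thesis unfolding dot_def matvec_def by (intro sum.cong refl) simp
  qed
  finally show ?thesis ..
qed

subsection \<open>Comparing the spectra of the Laplacian and the Helmholtzian\<close>

lemma card_neighbours: "card {w\<in>V. {v, w} \<in> E} = Defs.degree E v"
proof -
  have inj: "inj_on (\<lambda>w. {v, w}) {w\<in>V. {v, w} \<in> E}"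
    by (rule inj_onI) (auto simp: doubleton_eq_iff)
  have "(\<lambda>w. {v, w}) ` {w\<in>V. {v, w} \<in> E} = {e\<in>E. v \<in> e}"
  proof (intro equalityI subsetI)
    fix e assume e: "e \<in> {e\<in>E. v \<in> e}"
    then obtain a b where "a \<in> V" "b \<in> V" "e = {a, b}" by (metis (no_types, lifting) edgeE mem_Collect_eq)
    then have "\<exists>w\<in>V. e = {v, w}" using e by (auto simp: insert_commute)
    then show "e \<in> (\<lambda>w. {v, w}) ` {w\<in>V. {v, w} \<in> E}" using e by auto
  qed auto
  then show ?thesis unfolding Defs.degree_def using card_image[OF inj] by simp
qed

definition star_vector :: "'a \<Rightarrow> 'a \<Rightarrow> real" where
  "star_vector v w = (if w = v then real (Defs.degree E v) else if {v, w} \<in> E then -1 else 0)"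

lemma star_vector_norm:
  assumes "v \<in> V"
  shows "dot V (star_vector v) (star_vector v) = real (Defs.degree E v) * (real (Defs.degree E v) + 1)"
proof -
  let ?d = "real (Defs.degree E v)"
  have "dot V (star_vector v) (star_vector v)
      = (\<Sum>w\<in>V. (if w = v then ?d * ?d else 0) + (if w \<in> {w\<in>V. {v, w} \<in> E} then 1 else 0))"
    unfolding dot_def star_vector_def using no_loop by (intro sum.cong refl) auto
  also have "\<dots> = ?d * ?d + real (card {w\<in>V. {v, w} \<in> E})"
    using finite_V assms by (simp add: sum.distrib sum.If_cases Int_absorb1 Int_def)
  finally show ?thesis by (simp add: card_neighbours algebra_simps)
qed

lemma star_vector_energy:
  assumes "v \<in> V"
  shows "real (Defs.degree E v) * (real (Defs.degree E v) + 1)\<^sup>2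
    \<le> dot Or (grad (star_vector v)) (grad (star_vector v))"
proof -
  let ?d = "real (Defs.degree E v)" and ?x = "star_vector v"
  define P where "P = {p\<in>Or. v \<in> {fst p, snd p}}"
  have "(grad ?x p)\<^sup>2 = (?d + 1)\<^sup>2" if "p \<in> P" for p
  proof -
    have p: "p \<in> Or" "v = fst p \<or> v = snd p" using that unfolding P_def by auto
    have "{fst p, snd p} \<in> E" "fst p \<noteq> snd p" using arc_edge[OF p(1)] arc_ends(3)[OF p(1)] by auto
    then show ?thesis using p(2) no_loop
      by (auto simp: grad_def star_vector_def insert_commute power2_eq_square algebra_simps)
  qed
  then have "?d * (?d + 1)\<^sup>2 = (\<Sum>p\<in>P. (grad ?x p)\<^sup>2)"
    using card_arcs_at[of v] by (simp add: P_def)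
  also have "\<dots> \<le> (\<Sum>p\<in>Or. (grad ?x p)\<^sup>2)"
    using finite_Or by (intro sum_mono2) (auto simp: P_def)
  finally show ?thesis by (simp add: dot_def power2_eq_square)
qed

lemma degree_pos: "{a, b} \<in> E \<Longrightarrow> 0 < Defs.degree E a"
  unfolding Defs.degree_def using finite_E by (auto simp: card_gt_0_iff)

lemma max_degree_attained:
  assumes "V \<noteq> {}"
  obtains v where "v \<in> V" "Defs.degree E v = max_degree V E"
proof -
  have "max_degree V E \<in> Defs.degree E ` V"
    unfolding max_degree_def using finite_V assms by (intro Max_in) auto
  then obtain v where "v \<in> V" "max_degree V E = Defs.degree E v" by blast
  then show ?thesis by (intro that[of v]) simp_all
qed

lemma largest_laplacian_eigenvalue_ge_max_degree:
  assumes "E \<noteq> {}"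
  shows "real (max_degree V E) + 1 \<le> largest_eigenvalue V L"
proof -
  obtain e where "e \<in> E" using assms by blast
  then obtain a b where a: "a \<in> V" "{a, b} \<in> E" by (metis edgeE)
  then have "V \<noteq> {}" by blast
  then obtain v where v: "v \<in> V" "Defs.degree E v = max_degree V E" by (rule max_degree_attained)
  let ?d = "real (Defs.degree E v)"
  have "Defs.degree E a \<le> max_degree V E" unfolding max_degree_def using finite_V a(1) by simp
  then have d: "0 < ?d" using degree_pos[OF a(2)] v(2) by simp
  have "?d * (?d + 1) * (?d + 1) \<le> dot V (star_vector v) (matvec V L (star_vector v))"
    using star_vector_energy[OF v(1)] by (simp add: laplacian_quadratic_form power2_eq_square)
  also have "\<dots> \<le> largest_eigenvalue V L * (?d * (?d + 1))"
    using rayleigh_le_largest_eigenvalue[OF finite_V \<open>V \<noteq> {}\<close> laplacian_symmetric, of "star_vector v"]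
    by (simp add: star_vector_norm[OF v(1)])
  finally have "(?d + 1) * (?d * (?d + 1)) \<le> largest_eigenvalue V L * (?d * (?d + 1))"
    by (simp add: algebra_simps)
  then show ?thesis using d v(2) by (simp add: mult_le_cancel_right_pos)
qed

lemma helmholtzian_eigenvalue_of_laplacian:
  assumes "is_eigenvalue V L c" and "c \<noteq> 0"
  shows "is_eigenvalue Or H c"
proof -
  obtain x where x_ne: "\<exists>u\<in>V. x u \<noteq> 0" and x_eig: "\<forall>u\<in>V. matvec V L x u = c * x u"
    using assms(1) unfolding is_eigenvalue_iff_matvec by blast
  have "\<exists>p\<in>Or. grad x p \<noteq> 0"
  proof (rule ccontr)
    assume "\<not> ?thesis"
    then have "matvec V L x u = 0" if "u \<in> V" for u
      using that by (simp add: laplacian_matvec divergence_def)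
    then show False using x_ne x_eig \<open>c \<noteq> 0\<close> by auto
  qed
  moreover have "matvec Or H (grad x) p = c * grad x p" if "p \<in> Or" for p
    using that x_eig arc_ends[OF that] by (simp add: helmholtzian_grad grad_def algebra_simps)
  ultimately show ?thesis unfolding is_eigenvalue_iff_matvec by blast
qed

lemma helmholtzian_eigenvalue_cases:
  assumes "is_eigenvalue Or H c"
  shows "is_eigenvalue V L c \<or> (\<exists>p\<in>Or. \<bar>c\<bar> \<le> 3 * real (tri_count V E p))"
proof -
  obtain z where z_ne: "\<exists>p\<in>Or. z p \<noteq> 0" and z_eig: "\<forall>p\<in>Or. matvec Or H z p = c * z p"
    using assms unfolding is_eigenvalue_iff_matvec by blast
  show ?thesis
  proof (cases "\<exists>u\<in>V. divergence z u \<noteq> 0")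
    case True
    have "matvec V L (divergence z) u = c * divergence z u" if "u \<in> V" for u
      using that z_eig by (simp add: laplacian_divergence divergence_def sum_distrib_left mult_ac)
    then show ?thesis using True unfolding is_eigenvalue_iff_matvec by blast
  next
    case False
    then have "matvec Or up_laplacian z p = c * z p" if "p \<in> Or" for p
      using that z_eig helmholtzian_matvec[of z p] arc_ends[OF that] by (simp add: grad_def matvec_def)
    then have "is_eigenvalue Or up_laplacian c" unfolding is_eigenvalue_iff_matvec using z_ne by blast
    then obtain p where "p \<in> Or" "\<bar>c\<bar> \<le> (\<Sum>q\<in>Or. \<bar>up_laplacian p q\<bar>)"
      using gershgorin_bound[OF finite_Or] by blast
    then show ?thesis using up_laplacian_abs_row_sum by metis
  qed
qed

lemma tri_count_le_num_triangles: "tri_count V E p \<le> num_triangles V E"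
proof -
  have "{T. is_triangle V E T} \<subseteq> Pow V" unfolding is_triangle_def by auto
  then have "finite {T. is_triangle V E T}" using finite_V by (simp add: finite_subset)
  then show ?thesis unfolding tri_count_def num_triangles_def by (rule card_mono) auto
qed

end

theorem corollary5p4:
  fixes V :: "'a set" and E :: "'a set set" and Or :: "('a \<times> 'a) set"
  assumes "simple_graph V E"
    and "E \<noteq> {}"
    and "orientation E Or"
    and "num_triangles V E \<le> (max_degree V E + 1) div 3"
  shows "largest_eigenvalue Or (helmholtzian V E) = largest_eigenvalue V (laplacian E)"
proof -
  interpret oriented_graph V E Or using assms(1,3) by unfold_locales
  obtain p where "p \<in> Or" using assms(2) arc_exists by blast
  then have ne: "Or \<noteq> {}" "V \<noteq> {}" using arc_ends(1)[of p] by blast+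
  note H_max = largest_eigenvalue_is_eigenvalue[OF finite_Or ne(1) helmholtzian_symmetric]
    eigenvalue_le_largest_eigenvalue[OF finite_Or ne(1) helmholtzian_symmetric]
  note L_max = largest_eigenvalue_is_eigenvalue[OF finite_V ne(2) laplacian_symmetric]
    eigenvalue_le_largest_eigenvalue[OF finite_V ne(2) laplacian_symmetric]
  have L_ge: "real (max_degree V E) + 1 \<le> largest_eigenvalue V L"
    by (rule largest_laplacian_eigenvalue_ge_max_degree[OF assms(2)])
  have "largest_eigenvalue V L \<le> largest_eigenvalue Or H"
    using L_ge L_max(1) by (intro H_max(2) helmholtzian_eigenvalue_of_laplacian) auto
  moreover have "largest_eigenvalue Or H \<le> largest_eigenvalue V L"
  proof (cases "is_eigenvalue V L (largest_eigenvalue Or H)")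
    case False
    then obtain p where "p \<in> Or" "\<bar>largest_eigenvalue Or H\<bar> \<le> 3 * real (tri_count V E p)"
      using helmholtzian_eigenvalue_cases H_max(1) by blast
    moreover have "3 * tri_count V E p \<le> max_degree V E + 1"
      using tri_count_le_num_triangles[of p] assms(4) by linarith
    ultimately show ?thesis using L_ge by linarith
  qed (rule L_max(2))
  ultimately show ?thesis by simp
qed

end
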